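(* Let $\Lambda$ be an integral lattice of signature $(2,b)$ with $b\ge3$ and $\tilde{\mathrm{O}}^+(\Lambda)$ the kernel of $\mathrm{O}^+(\Lambda)\to\mathrm{O}(\Lambda^\vee/\Lambda)$. Then for every $k$, $M_k(\tilde{\mathrm{O}}^+(\Lambda),\det)^{(1)}=M_k(\tilde{\mathrm{O}}^+(\Lambda),\det)$, i.e. every modular form of weight $k$ and character $\det$ for $\tilde{\mathrm{O}}^+(\Lambda)$ vanishes along every irreducible component of the $(-2)$-Heegner divisor.
   Context: $\mathcal{D}$ is one of the two connected components of $\{[\omega]\in\mathbb{P}(\Lambda\otimes\mathbb{C}):(\omega,\omega)=0,(\omega,\bar\omega)>0\}$ and $\mathrm{O}^+(\Lambda)$ the subgroup of $\mathrm{O}(\Lambda)$ preserving $\mathcal{D}$. $\lambda=\mathcal{O}(-1)|_{\mathcal{D}}$. $M_k(\Gamma,\chi)$ is the space of $\Gamma$-invariant holomorphic sections of $\lambda^{\otimes k}\otimes\chi$ on $\mathcal{D}$. The $(-2)$-Heegner divisor is $\mathcal{H}=\bigcup_{\delta\in\Lambda,(\delta,\delta)=-2}\delta^\perp\cap\mathcal{D}$, and $M_k(\Gamma,\chi)^{(m)}$ is the subspace of forms vanishing to order $\ge m$ along every irreducible component of $\mathcal{H}$. *)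

theory Defs
  imports "HOL-Analysis.Analysis"
begin

text \<open>The lattice is \<open>\<int>^'n\<close> with integral symmetric Gram matrix \<open>G\<close>.\<close>

definition bilin :: "'a::comm_ring_1 ^'n ^'n \<Rightarrow> 'a ^'n \<Rightarrow> 'a ^'n \<Rightarrow> 'a" where
  "bilin G x y = (\<Sum>i\<in>UNIV. \<Sum>j\<in>UNIV. x$i * G$i$j * y$j)"

definition cmat :: "int ^'n ^'m \<Rightarrow> complex ^'n ^'m" where
  "cmat g = (\<chi> i j. of_int (g$i$j))"

definition rmat :: "int ^'n ^'m \<Rightarrow> real ^'n ^'m" where
  "rmat g = (\<chi> i j. of_int (g$i$j))"

definition cvec :: "int ^'n \<Rightarrow> complex ^'n" where
  "cvec v = (\<chi> i. of_int (v$i))"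

definition qvec :: "int ^'n \<Rightarrow> rat ^'n" where
  "qvec v = (\<chi> i. of_int (v$i))"

definition qmat :: "int ^'n ^'m \<Rightarrow> rat ^'n ^'m" where
  "qmat g = (\<chi> i j. of_int (g$i$j))"

definition cconj :: "complex ^'n \<Rightarrow> complex ^'n" where
  "cconj w = (\<chi> i. cnj (w$i))"

definition posdef_on :: "int ^'n ^'n \<Rightarrow> (real ^'n) set \<Rightarrow> bool" where
  "posdef_on G V \<longleftrightarrow> (\<forall>v\<in>V. v \<noteq> 0 \<longrightarrow> bilin (rmat G) v v > 0)"

definition signature_2_b :: "int ^'n ^'n \<Rightarrow> nat \<Rightarrow> bool" where
  "signature_2_b G b \<longleftrightarrow> transpose G = G \<and> det (rmat G) \<noteq> 0 \<and> CARD('n) = b + 2 \<and>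
     (\<exists>V. subspace V \<and> dim V = 2 \<and> posdef_on G V) \<and>
     \<not> (\<exists>V. subspace V \<and> dim V = 3 \<and> posdef_on G V)"

text \<open>Affine cone over the period domain (both components).\<close>
definition period_cone :: "int ^'n ^'n \<Rightarrow> (complex ^'n) set" where
  "period_cone G = {w. bilin (cmat G) w w = 0 \<and> Re (bilin (cmat G) w (cconj w)) > 0}"

definition orth_group :: "int ^'n ^'n \<Rightarrow> (int ^'n ^'n) set" where
  "orth_group G = {g. transpose g ** G ** g = G \<and> (det g = 1 \<or> det g = -1)}"

definition orth_plus :: "int ^'n ^'n \<Rightarrow> (complex ^'n) set \<Rightarrow> (int ^'n ^'n) set" where
  "orth_plus G D = {g \<in> orth_group G. (\<lambda>w. cmat g *v w) ` D = D}"

definition dual_lattice :: "int ^'n ^'n \<Rightarrow> (rat ^'n) set" where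
  "dual_lattice G = {x. \<exists>v. qmat G *v x = qvec v}"

definition disc_kernel :: "int ^'n ^'n \<Rightarrow> (complex ^'n) set \<Rightarrow> (int ^'n ^'n) set" where
  "disc_kernel G D = {g \<in> orth_plus G D.
      \<forall>x\<in>dual_lattice G. \<exists>v. qmat g *v x - x = qvec v}"

definition holo_several :: "(complex ^'n \<Rightarrow> complex) \<Rightarrow> (complex ^'n) set \<Rightarrow> bool" where
  "holo_several f U \<longleftrightarrow> (\<forall>x\<in>U. \<exists>L. (f has_derivative L) (at x) \<and>
        (\<forall>c v. L (c *s v) = c * L v))"

text \<open>Modular forms of weight k and character chi for Gamma, as homogeneous functions
 on the affine cone D over the period domain, holomorphic on that complex submanifold.\<close>
definition modular_form ::
  "int ^'n ^'n \<Rightarrow> (complex ^'n) set \<Rightarrow> (int ^'n ^'n) set \<Rightarrow> (int ^'n ^'n \<Rightarrow> complex)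
     \<Rightarrow> int \<Rightarrow> (complex ^'n \<Rightarrow> complex) \<Rightarrow> bool" where
  "modular_form G D \<Gamma> chr k F \<longleftrightarrow>
     (\<forall>w\<in>D. \<exists>U f. open U \<and> w \<in> U \<and> holo_several f U \<and> (\<forall>x\<in>U \<inter> D. F x = f x)) \<and>
     (\<forall>w\<in>D. \<forall>t. t \<noteq> 0 \<longrightarrow> F (t *s w) = t powi (- k) * F w) \<and>
     (\<forall>g\<in>\<Gamma>. \<forall>w\<in>D. F (cmat g *v w) = chr g * F w)"

definition vanishes_on_heegner_m2 :: "int ^'n ^'n \<Rightarrow> (complex ^'n) set \<Rightarrow> (complex ^'n \<Rightarrow> complex) \<Rightarrow> bool" where
  "vanishes_on_heegner_m2 G D F \<longleftrightarrow>
     (\<forall>\<delta>. bilin G \<delta> \<delta> = -2 \<longrightarrow> (\<forall>w\<in>D. bilin (cmat G) (cvec \<delta>) w = 0 \<longrightarrow> F w = 0))"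

end

theory Submission
  imports Defs
begin

text \<open>For a vector \<open>\<delta>\<close> of norm \<open>-2\<close> the reflection \<open>\<sigma>(x) = x + (\<delta>,x) \<delta>\<close> is an integral
  isometry of determinant \<open>-1\<close>. It acts trivially on \<open>\<Lambda>\<^sup>\<or>/\<Lambda>\<close>, because
  \<open>\<sigma>(x) - x = (\<delta>,x) \<delta> \<in> \<Lambda>\<close> for \<open>x \<in> \<Lambda>\<^sup>\<or>\<close>, and it fixes \<open>\<delta>\<^sup>\<bottom>\<close> pointwise; fixing a point
  of the component \<open>D\<close>, the continuous involution \<open>\<sigma>\<close> maps \<open>D\<close> onto itself. Hence \<open>\<sigma>\<close> lies in
  the discriminant kernel, and for \<open>w \<in> D \<inter> \<delta>\<^sup>\<bottom>\<close> we get \<open>F(w) = F(\<sigma> w) = det \<sigma> \<cdot> F(w) = -F(w)\<close>.\<close>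

lemma det_replace_row_identity:
  "det ((\<chi> i. if i = k then v else axis i 1) :: 'a::comm_ring_1^'n^'n) = v$k"
proof -
  have "det ((\<chi> i. if i = k then v else axis i 1) :: 'a^'n^'n)
     = (\<Sum>j\<in>UNIV. v$j * det ((\<chi> i. if i = k then axis j 1 else axis i 1) :: 'a^'n^'n))"
    by (subst basis_expansion[of v, symmetric], subst det_linear_row_sum) (simp_all add: det_row_mul)
  also have "\<dots> = (\<Sum>j\<in>UNIV. if j = k then v$j else 0)"
  proof (rule sum.cong)
    fix j
    show "v$j * det ((\<chi> i. if i = k then axis j 1 else axis i 1) :: 'a^'n^'n) = (if j = k then v$j else 0)"
    proof (cases "j = k")
      case True
      then have "((\<chi> i. if i = k then axis j 1 else axis i 1) :: 'a^'n^'n) = mat 1"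
        by (simp add: vec_eq_iff mat_def axis_def)
      then show ?thesis using True by simp
    next
      case False
      then have "det ((\<chi> i. if i = k then axis j 1 else axis i 1) :: 'a^'n^'n) = 0"
        by (intro det_identical_rows[of k j]) (auto simp: row_def vec_eq_iff)
      then show ?thesis using False by simp
    qed
  qed simp
  finally show ?thesis by simp
qed

lemma det_replace_row_rank_one_update:
  fixes u v :: "'a::comm_ring_1^'n"
  assumes "finite S" "k \<notin> S"
  shows "det ((\<chi> i. if i = k then v else if i \<in> S then axis i 1 + u$i *s v else axis i 1) :: 'a^'n^'n)
    = v$k"
  using assms
proof (induction S rule: finite_induct)
  case empty
  show ?case by (simp only: empty_iff if_False det_replace_row_identity)
next
  case (insert j S)
  let ?A = "(\<chi> i. if i = k then v else if i \<in> insert j S then axis i 1 + u$i *s v else axis i 1)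
    :: 'a^'n^'n"
  have "j \<noteq> k" using insert by auto
  then have "det ?A = det (\<chi> l. if l = j then row j ?A + (- u$j) *s row k ?A else row l ?A)"
    by (rule det_row_operation[symmetric])
  also have "(\<chi> l. if l = j then row j ?A + (- u$j) *s row k ?A else row l ?A) =
     (\<chi> i. if i = k then v else if i \<in> S then axis i 1 + u$i *s v else axis i 1)"
    using \<open>j \<noteq> k\<close> insert.hyps by (auto simp: vec_eq_iff row_def)
  finally show ?case using insert by simp
qed

lemma det_rank_one_update_rows:
  fixes u v :: "'a::comm_ring_1^'n"
  assumes "finite S"
  shows "det ((\<chi> i. if i \<in> S then axis i 1 + u$i *s v else axis i 1) :: 'a^'n^'n)
    = 1 + (\<Sum>i\<in>S. u$i * v$i)"
  using assms
proof (induction S rule: finite_induct)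
  case empty
  have "((\<chi> i. axis i 1) :: 'a^'n^'n) = mat 1" by (simp add: vec_eq_iff mat_def axis_def)
  then show ?case by simp
next
  case (insert k S)
  let ?row = "\<lambda>i. if i \<in> S then axis i 1 + u$i *s v else axis i 1"
  have "((\<chi> i. if i \<in> insert k S then axis i 1 + u$i *s v else axis i 1) :: 'a^'n^'n)
     = (\<chi> i. if i = k then axis i 1 + u$k *s v else ?row i)"
    by (auto simp: vec_eq_iff)
  moreover have "det ((\<chi> i. if i = k then axis i 1 + u$k *s v else ?row i) :: 'a^'n^'n)
     = det ((\<chi> i. if i = k then axis i 1 else ?row i) :: 'a^'n^'n)
       + u$k * det ((\<chi> i. if i = k then v else ?row i) :: 'a^'n^'n)"
    by (simp only: det_row_add det_row_mul)
  moreover have "((\<chi> i. if i = k then axis i 1 else ?row i) :: 'a^'n^'n) = (\<chi> i. ?row i)"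
    using insert.hyps by (auto simp: vec_eq_iff)
  moreover have "det ((\<chi> i. if i = k then v else ?row i) :: 'a^'n^'n) = v$k"
    by (rule det_replace_row_rank_one_update[OF insert.hyps])
  ultimately show ?case
    using insert by (simp add: algebra_simps)
qed

lemma det_identity_plus_rank_one:
  "det (mat 1 + (\<chi> i j. u$i * v$j) :: 'a::comm_ring_1^'n^'n) = 1 + (\<Sum>i\<in>UNIV. u$i * v$i)"
proof -
  have "mat 1 + (\<chi> i j. u$i * v$j) =
      ((\<chi> i. if i \<in> UNIV then axis i 1 + u$i *s v else axis i 1) :: 'a^'n^'n)"
    by (simp add: vec_eq_iff mat_def axis_def)
  then show ?thesis by (simp only: det_rank_one_update_rows[OF finite])
qed

lemma bilin_add_left: "bilin M (x + y) z = bilin M x z + bilin M y z"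
  by (simp add: bilin_def algebra_simps sum.distrib)

lemma bilin_add_right: "bilin M z (x + y) = bilin M z x + bilin M z y"
  by (simp add: bilin_def algebra_simps sum.distrib)

lemma bilin_scale_left: "bilin M (c *s x) y = c * bilin M x y"
  by (simp add: bilin_def sum_distrib_left algebra_simps)

lemma bilin_scale_right: "bilin M x (c *s y) = c * bilin M x y"
  by (simp add: bilin_def sum_distrib_left algebra_simps)

lemma bilin_commute:
  assumes "transpose M = M"
  shows "bilin M x y = bilin M y x"
proof -
  have "M$i$j = M$j$i" for i j
    using arg_cong[where f = "\<lambda>A. A$j$i", OF assms] by (simp add: transpose_def)
  then show ?thesis
    unfolding bilin_def by (subst sum.swap) (simp add: algebra_simps)
qed

lemma bilin_matrix_vector_right: "bilin M x y = (\<Sum>i\<in>UNIV. x$i * (M *v y)$i)"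
  by (simp add: bilin_def matrix_vector_mult_def sum_distrib_left algebra_simps)

lemma bilin_vector_matrix_left: "bilin M x y = (\<Sum>j\<in>UNIV. (x v* M)$j * y$j)"
  unfolding bilin_def vector_matrix_mult_def
  by (subst sum.swap) (simp add: sum_distrib_right)

lemma sum_vector_matrix_mult:
  "(\<Sum>j\<in>UNIV. (x v* A)$j * y$j) = (\<Sum>i\<in>UNIV. x$i * (A *v y)$i :: 'a::comm_semiring_1)"
proof -
  have "(\<Sum>j\<in>UNIV. (x v* A)$j * y$j) = (\<Sum>j\<in>UNIV. \<Sum>i\<in>UNIV. x$i * A$i$j * y$j)"
    by (simp add: vector_matrix_mult_def sum_distrib_right)
  also have "\<dots> = (\<Sum>i\<in>UNIV. \<Sum>j\<in>UNIV. x$i * A$i$j * y$j)"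
    by (rule sum.swap)
  also have "\<dots> = (\<Sum>i\<in>UNIV. x$i * (A *v y)$i)"
    by (simp add: matrix_vector_mult_def sum_distrib_left mult.assoc)
  finally show ?thesis .
qed

lemma bilin_matrix_vector_mult:
  "bilin M (A *v x) (A *v y) = bilin (transpose A ** M ** A) x y"
proof -
  have "bilin M (A *v x) (A *v y) = (\<Sum>j\<in>UNIV. (x v* transpose A)$j * ((M ** A) *v y)$j)"
    by (simp add: bilin_matrix_vector_right matrix_vector_mul_assoc)
  also have "\<dots> = bilin (transpose A ** M ** A) x y"
    by (simp only: sum_vector_matrix_mult bilin_matrix_vector_right matrix_vector_mul_assoc
        matrix_mul_assoc)
  finally show ?thesis .
qed

lemma bilin_axis: "bilin M (axis i 1) (axis j 1) = M$i$j"
  by (simp add: bilin_def axis_def if_distrib [of "\<lambda>c. c * _"] if_distrib [of "\<lambda>c. _ * c"]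
      cong: if_cong)

lemma bilin_eqI: "(\<And>x y. bilin A x y = bilin B x y) \<Longrightarrow> A = B"
  by (metis bilin_axis vec_eq_iff)

text \<open>For \<open>bilin M d d = -2\<close> this is the reflection \<open>x - 2 (d,x)/(d,d) d\<close> in \<open>d\<^sup>\<bottom>\<close>,
  written without division so that it is defined over any ring.\<close>

definition reflection :: "'a::comm_ring_1^'n^'n \<Rightarrow> 'a^'n \<Rightarrow> 'a^'n^'n" where
  "reflection M d = mat 1 + (\<chi> i j. d$i * (d v* M)$j)"

lemma reflection_mult_vector: "reflection M d *v x = x + bilin M d x *s d"
proof -
  have "(\<chi> i j. d$i * (d v* M)$j) *v x = bilin M d x *s d"
    by (simp add: vec_eq_iff matrix_vector_mult_def bilin_vector_matrix_left sum_distrib_left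
        ac_simps)
  then show ?thesis
    by (simp add: reflection_def matrix_vector_mult_add_rdistrib)
qed

lemma det_reflection: "det (reflection M d) = 1 + bilin M d d"
  by (simp add: reflection_def det_identity_plus_rank_one bilin_vector_matrix_left mult.commute)

lemma reflection_involutive:
  assumes "bilin M d d = -2"
  shows "reflection M d *v (reflection M d *v x) = x"
  using assms
  by (simp add: reflection_mult_vector bilin_add_right bilin_scale_right vec_eq_iff algebra_simps)

lemma bilin_reflection:
  assumes "transpose M = M" "bilin M d d = -2"
  shows "bilin M (reflection M d *v x) (reflection M d *v y) = bilin M x y"
  using assms bilin_commute[OF assms(1), of x d]
  by (simp add: reflection_mult_vector bilin_add_left bilin_add_right bilin_scale_left
      bilin_scale_right algebra_simps)

lemma reflection_orthogonal:
  assumes "transpose M = M" "bilin M d d = -2"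
  shows "transpose (reflection M d) ** M ** reflection M d = M"
  by (rule bilin_eqI) (metis bilin_matrix_vector_mult bilin_reflection[OF assms])

lemma cmat_reflection: "cmat (reflection G d) = reflection (cmat G) (cvec d)"
  by (simp add: vec_eq_iff cmat_def cvec_def reflection_def vector_matrix_mult_def mat_def)

lemma qmat_reflection: "qmat (reflection G d) = reflection (qmat G) (qvec d)"
  by (simp add: vec_eq_iff qmat_def qvec_def reflection_def vector_matrix_mult_def mat_def)

lemma bilin_cvec: "bilin (cmat G) (cvec x) (cvec y) = of_int (bilin G x y)"
  by (simp add: bilin_def cmat_def cvec_def)

lemma transpose_cmat: "transpose (cmat G) = cmat (transpose G)"
  by (simp add: vec_eq_iff transpose_def cmat_def)

lemma cconj_cmat_mult: "cconj (cmat g *v w) = cmat g *v cconj w"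
  by (simp add: vec_eq_iff cconj_def cmat_def matrix_vector_mult_def)

lemma component_image_eq_involution:
  assumes D: "D \<in> components S"
    and f: "continuous_on S f" "f ` S \<subseteq> S" "\<And>x. x \<in> S \<Longrightarrow> f (f x) = x"
    and x: "x \<in> D" "f x \<in> D"
  shows "f ` D = D"
proof
  have "D \<subseteq> S" using D by (rule in_components_subset)
  moreover have "connected (f ` D)"
    using D f(1) \<open>D \<subseteq> S\<close> by (metis connected_continuous_image continuous_on_subset
        in_components_connected)
  ultimately show "f ` D \<subseteq> D"
    using x f(2) by (intro components_maximal[OF D]) auto
  then show "D \<subseteq> f ` D"
    using f(3) \<open>D \<subseteq> S\<close> by (metis image_subset_iff subsetI image_eqI subsetD)
qed

lemma reflection_in_orth_group:
  assumes "transpose G = G" "bilin G d d = -2"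
  shows "reflection G d \<in> orth_group G"
  using assms by (simp add: orth_group_def reflection_orthogonal det_reflection)

lemma reflection_period_cone:
  assumes "transpose G = G" "bilin G d d = -2" "w \<in> period_cone G"
  shows "cmat (reflection G d) *v w \<in> period_cone G"
proof -
  have "transpose (cmat G) = cmat G" "bilin (cmat G) (cvec d) (cvec d) = -2"
    using assms(1,2) by (simp_all add: transpose_cmat bilin_cvec)
  moreover have "cconj (cmat (reflection G d) *v w) = cmat (reflection G d) *v cconj w"
    by (rule cconj_cmat_mult)
  ultimately show ?thesis
    using assms(3) bilin_reflection[of "cmat G" "cvec d"]
    by (simp add: period_cone_def cmat_reflection)
qed

lemma reflection_acts_trivially_on_discriminant:
  assumes "x \<in> dual_lattice G"
  shows "\<exists>v. qmat (reflection G d) *v x - x = qvec v"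
proof -
  obtain v where v: "qmat G *v x = qvec v"
    using assms by (auto simp: dual_lattice_def)
  have "bilin (qmat G) (qvec d) x = of_int (\<Sum>i\<in>UNIV. d$i * v$i)"
    unfolding bilin_matrix_vector_right v by (simp add: qvec_def)
  then have "qmat (reflection G d) *v x - x = qvec ((\<Sum>i\<in>UNIV. d$i * v$i) *s d)"
    by (simp add: qmat_reflection reflection_mult_vector vec_eq_iff qvec_def)
  then show ?thesis by blast
qed

lemma reflection_in_disc_kernel:
  assumes "transpose G = G" "bilin G d d = -2"
    and "D \<in> components (period_cone G)" "w \<in> D" "bilin (cmat G) (cvec d) w = 0"
  shows "reflection G d \<in> disc_kernel G D"
proof -
  let ?f = "\<lambda>w. cmat (reflection G d) *v w"
  have "bilin (cmat G) (cvec d) (cvec d) = -2"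
    using assms(2) by (simp add: bilin_cvec)
  then have "?f (?f u) = u" for u
    by (simp add: cmat_reflection reflection_involutive)
  moreover have "?f w = w"
    using assms(5) by (simp add: cmat_reflection reflection_mult_vector)
  ultimately have "?f ` D = D"
    using assms reflection_period_cone
    by (intro component_image_eq_involution[where S = "period_cone G" and x = w])
      (auto intro: continuous_intros)
  then show ?thesis
    using assms(1,2)
    by (simp add: disc_kernel_def orth_plus_def reflection_in_orth_group
        reflection_acts_trivially_on_discriminant)
qed

theorem corollary3p3:
  fixes G :: "int ^'n ^'n" and b :: nat and D :: "(complex ^'n) set"
    and k :: int and F :: "complex ^'n \<Rightarrow> complex"
  assumes "signature_2_b G b" and "b \<ge> 3"
    and "D \<in> components (period_cone G)"
    and "modular_form G D (disc_kernel G D) (\<lambda>g. of_int (det g)) k F"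
  shows "vanishes_on_heegner_m2 G D F"
  unfolding vanishes_on_heegner_m2_def
proof (intro allI impI ballI)
  fix \<delta> :: "int^'n" and w
  assume \<delta>: "bilin G \<delta> \<delta> = -2" and w: "w \<in> D" "bilin (cmat G) (cvec \<delta>) w = 0"
  have "transpose G = G"
    using assms(1) by (simp add: signature_2_b_def)
  then have "reflection G \<delta> \<in> disc_kernel G D"
    using \<delta> assms(3) w by (rule reflection_in_disc_kernel)
  then have "F (cmat (reflection G \<delta>) *v w) = of_int (det (reflection G \<delta>)) * F w"
    using assms(4) w(1) by (simp add: modular_form_def)
  moreover have "cmat (reflection G \<delta>) *v w = w"
    using w(2) by (simp add: cmat_reflection reflection_mult_vector)
  ultimately have "F w = - F w"
    using \<delta> by (simp add: det_reflection)
  then show "F w = 0" by simp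
qed

end
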